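(* Let $\mathcal M=(f,aN)$ be a tight polymatroid, where $a\notin N$, and let $\alpha_1,\alpha_2\ge0$ with $\alpha_1+\alpha_2=f(a)$. Let $\mathcal N=(g,a_1a_2N)$ be the polymatroid that splits $a$ in $\mathcal M$ with parameters $\alpha_1,\alpha_2$, i.e. for all $A\subseteq N$: $g(A)=f(A)$, $g(a_1a_2A)=f(aA)$, and $g(a_iA)=\min\{f(A)+\alpha_i,\,f(aA)\}$ for $i=1,2$. Then the dual $\mathcal N^\perp=(g^\perp,a_1a_2N)$ splits $a$ in $\mathcal M^\perp=(f^\perp,aN)$ with the same parameters: for all $A\subseteq N$, $g^\perp(A)=f^\perp(A)$, $g^\perp(a_1a_2A)=f^\perp(aA)$, and $g^\perp(a_iA)=\min\{f^\perp(A)+\alpha_i,\,f^\perp(aA)\}$ for $i=1,2$; moreover $f^\perp(a)=f(a)=\alpha_1+\alpha_2$.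
   Context: A polymatroid $(f,M)$ consists of a finite set $M$ and a function $f$ on subsets of $M$ with $f(\emptyset)=0$ that is non-negative, monotone and submodular. It is tight if $f(M)=f(M\setminus\{i\})$ for all $i\in M$. The dual of $(f,M)$ is $(f^\perp,M)$ with $f^\perp(A)=f(M\setminus A)+\sum_{i\in A}f(i)-f(M)$. Juxtaposition denotes union, e.g. $aN=\{a\}\cup N$. *)

theory Defs
  imports Complex_Main
begin

definition polymatroid :: "('a set \<Rightarrow> real) \<Rightarrow> 'a set \<Rightarrow> bool" where
  "polymatroid f M \<longleftrightarrow> finite M \<and> f {} = 0
     \<and> (\<forall>A. A \<subseteq> M \<longrightarrow> f A \<ge> 0)
     \<and> (\<forall>A B. A \<subseteq> B \<and> B \<subseteq> M \<longrightarrow> f A \<le> f B)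
     \<and> (\<forall>A B. A \<subseteq> M \<and> B \<subseteq> M \<longrightarrow> f (A \<union> B) + f (A \<inter> B) \<le> f A + f B)"

definition tight :: "('a set \<Rightarrow> real) \<Rightarrow> 'a set \<Rightarrow> bool" where
  "tight f M \<longleftrightarrow> (\<forall>i\<in>M. f M = f (M - {i}))"

definition pm_dual :: "('a set \<Rightarrow> real) \<Rightarrow> 'a set \<Rightarrow> 'a set \<Rightarrow> real" where
  "pm_dual f M A = f (M - A) + (\<Sum>i\<in>A. f {i}) - f M"

end

theory Submission
  imports Defs
begin

text \<open>Every value of a dual is an explicit affine expression in the values of the primal
  polymatroid, so the claim is a direct computation: the complement of a set containing
  \<open>a\<^sub>1\<close> but not \<open>a\<^sub>2\<close> contains \<open>a\<^sub>2\<close> but not \<open>a\<^sub>1\<close>, which exchanges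
  the two parameters, and the identity \<open>min (x + \<alpha>\<^sub>2) y + \<alpha>\<^sub>1 = min (x + \<alpha>\<^sub>1 + \<alpha>\<^sub>2) (y + \<alpha>\<^sub>1)\<close>
  restores the shape of a split. Tightness is needed only for \<open>f\<^sup>\<perp>(a) = f(a)\<close>.\<close>

definition splits ::
  "('a set \<Rightarrow> real) \<Rightarrow> ('a set \<Rightarrow> real) \<Rightarrow> 'a \<Rightarrow> 'a \<Rightarrow> 'a \<Rightarrow> 'a set \<Rightarrow> real \<Rightarrow> real \<Rightarrow> bool"
  where
  "splits g f a a1 a2 N \<alpha>1 \<alpha>2 \<longleftrightarrow> (\<forall>A\<subseteq>N.
      g A = f A
    \<and> g (insert a1 (insert a2 A)) = f (insert a A)
    \<and> g (insert a1 A) = min (f A + \<alpha>1) (f (insert a A))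
    \<and> g (insert a2 A) = min (f A + \<alpha>2) (f (insert a A)))"

lemma tight_pm_dual_singleton:
  assumes "tight f M" and "x \<in> M"
  shows "pm_dual f M {x} = f {x}"
  using assms unfolding tight_def pm_dual_def by simp

lemma splits_singleton_values:
  assumes "splits g f a a1 a2 N \<alpha>1 \<alpha>2" and "f {} = 0"
    and "\<alpha>1 \<ge> 0" and "\<alpha>2 \<ge> 0" and "\<alpha>1 + \<alpha>2 = f {a}"
  shows "g {a1} = \<alpha>1" and "g {a2} = \<alpha>2"
  using assms unfolding splits_def by (auto dest: spec[of _ "{}"])

lemma splits_sum_singletons:
  assumes "splits g f a a1 a2 N \<alpha>1 \<alpha>2" and "A \<subseteq> N"
  shows "(\<Sum>i\<in>A. g {i}) = (\<Sum>i\<in>A. f {i})"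
  using assms unfolding splits_def by (intro sum.cong) auto

lemma splits_pm_dual:
  assumes "a \<notin> N" "a1 \<notin> N" "a2 \<notin> N" "a1 \<noteq> a2" "finite N" "f {} = 0"
    and "\<alpha>1 \<ge> 0" "\<alpha>2 \<ge> 0" "\<alpha>1 + \<alpha>2 = f {a}"
    and split: "splits g f a a1 a2 N \<alpha>1 \<alpha>2"
  shows "splits (pm_dual g (insert a1 (insert a2 N))) (pm_dual f (insert a N)) a a1 a2 N \<alpha>1 \<alpha>2"
  unfolding splits_def
proof (intro allI impI)
  let ?g' = "pm_dual g (insert a1 (insert a2 N))" and ?f' = "pm_dual f (insert a N)"
  fix A assume "A \<subseteq> N"
  define B where "B = N - A"
  define c where "c = (\<Sum>i\<in>A. f {i}) - f (insert a N)"
  have "B \<subseteq> N" and "finite A" and "a \<notin> A" "a1 \<notin> A" "a2 \<notin> A"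
    using \<open>A \<subseteq> N\<close> assms(1-3,5) finite_subset unfolding B_def by auto
  have g_B: "g B = f B" "g (insert a1 (insert a2 B)) = f (insert a B)"
      "g (insert a1 B) = min (f B + \<alpha>1) (f (insert a B))"
      "g (insert a2 B) = min (f B + \<alpha>2) (f (insert a B))"
    using split \<open>B \<subseteq> N\<close> unfolding splits_def by auto
  have g_top: "g (insert a1 (insert a2 N)) = f (insert a N)"
    using split unfolding splits_def by auto
  have "g {a1} = \<alpha>1" "g {a2} = \<alpha>2"
    using splits_singleton_values[OF split assms(6-9)] by auto
  moreover have "(\<Sum>i\<in>A. g {i}) = (\<Sum>i\<in>A. f {i})"
    using splits_sum_singletons[OF split \<open>A \<subseteq> N\<close>] .
  ultimately have g_sums:
      "(\<Sum>i\<in>A. g {i}) = c + f (insert a N)"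
      "(\<Sum>i\<in>insert a1 (insert a2 A). g {i}) = \<alpha>1 + \<alpha>2 + c + f (insert a N)"
      "(\<Sum>i\<in>insert a1 A. g {i}) = \<alpha>1 + c + f (insert a N)"
      "(\<Sum>i\<in>insert a2 A. g {i}) = \<alpha>2 + c + f (insert a N)"
    using \<open>finite A\<close> \<open>a1 \<notin> A\<close> \<open>a2 \<notin> A\<close> \<open>a1 \<noteq> a2\<close> unfolding c_def by simp_all
  have f_sum: "(\<Sum>i\<in>insert a A. f {i}) = \<alpha>1 + \<alpha>2 + c + f (insert a N)"
    using \<open>finite A\<close> \<open>a \<notin> A\<close> assms(9) unfolding c_def by simp
  have complements:
      "insert a1 (insert a2 N) - A = insert a1 (insert a2 B)"
      "insert a1 (insert a2 N) - insert a1 (insert a2 A) = B"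
      "insert a1 (insert a2 N) - insert a1 A = insert a2 B"
      "insert a1 (insert a2 N) - insert a2 A = insert a1 B"
      "insert a N - A = insert a B"
      "insert a N - insert a A = B"
    using assms(1-4) \<open>a \<notin> A\<close> \<open>a1 \<notin> A\<close> \<open>a2 \<notin> A\<close> unfolding B_def by auto
  have f_dual: "?f' A = f (insert a B) + c" "?f' (insert a A) = f B + \<alpha>1 + \<alpha>2 + c"
    unfolding pm_dual_def complements f_sum c_def by simp_all
  have "?g' A = f (insert a B) + c"
    "?g' (insert a1 (insert a2 A)) = f B + \<alpha>1 + \<alpha>2 + c"
    "?g' (insert a1 A) = min (f B + \<alpha>2) (f (insert a B)) + \<alpha>1 + c"
    "?g' (insert a2 A) = min (f B + \<alpha>1) (f (insert a B)) + \<alpha>2 + c"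
    unfolding pm_dual_def complements g_sums g_B g_top by simp_all
  then show "?g' A = ?f' A \<and> ?g' (insert a1 (insert a2 A)) = ?f' (insert a A)
    \<and> ?g' (insert a1 A) = min (?f' A + \<alpha>1) (?f' (insert a A))
    \<and> ?g' (insert a2 A) = min (?f' A + \<alpha>2) (?f' (insert a A))"
    unfolding f_dual by (simp add: min_def)
qed

theorem lemma2p11:
  fixes f g :: "'a set \<Rightarrow> real" and a a1 a2 :: 'a and N :: "'a set"
    and \<alpha>1 \<alpha>2 :: real
  assumes "a \<notin> N" and "a1 \<notin> N" and "a2 \<notin> N" and "a1 \<noteq> a2"
    and "polymatroid f (insert a N)" and "tight f (insert a N)"
    and "\<alpha>1 \<ge> 0" and "\<alpha>2 \<ge> 0" and "\<alpha>1 + \<alpha>2 = f {a}"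
    and "polymatroid g (insert a1 (insert a2 N))"
    and "\<And>A. A \<subseteq> N \<Longrightarrow> g A = f A"
    and "\<And>A. A \<subseteq> N \<Longrightarrow> g (insert a1 (insert a2 A)) = f (insert a A)"
    and "\<And>A. A \<subseteq> N \<Longrightarrow> g (insert a1 A) = min (f A + \<alpha>1) (f (insert a A))"
    and "\<And>A. A \<subseteq> N \<Longrightarrow> g (insert a2 A) = min (f A + \<alpha>2) (f (insert a A))"
  shows "(\<forall>A. A \<subseteq> N \<longrightarrow>
            pm_dual g (insert a1 (insert a2 N)) A = pm_dual f (insert a N) A
          \<and> pm_dual g (insert a1 (insert a2 N)) (insert a1 (insert a2 A))
              = pm_dual f (insert a N) (insert a A)
          \<and> pm_dual g (insert a1 (insert a2 N)) (insert a1 A)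
              = min (pm_dual f (insert a N) A + \<alpha>1) (pm_dual f (insert a N) (insert a A))
          \<and> pm_dual g (insert a1 (insert a2 N)) (insert a2 A)
              = min (pm_dual f (insert a N) A + \<alpha>2) (pm_dual f (insert a N) (insert a A)))
       \<and> pm_dual f (insert a N) {a} = f {a} \<and> f {a} = \<alpha>1 + \<alpha>2"
proof -
  have "finite N" and "f {} = 0"
    using \<open>polymatroid f (insert a N)\<close> unfolding polymatroid_def by auto
  moreover have "splits g f a a1 a2 N \<alpha>1 \<alpha>2"
    using assms(11-14) unfolding splits_def by blast
  ultimately have "splits (pm_dual g (insert a1 (insert a2 N))) (pm_dual f (insert a N))
      a a1 a2 N \<alpha>1 \<alpha>2"
    using splits_pm_dual[where f = f, OF assms(1-4) _ _ assms(7-9)] by blast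
  moreover have "pm_dual f (insert a N) {a} = f {a}"
    using \<open>tight f (insert a N)\<close> by (rule tight_pm_dual_singleton) simp
  ultimately show ?thesis
    unfolding splits_def using assms(9) by (intro conjI) (assumption | rule sym)+
qed

end
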